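(* Let $X_t \subset X_{t+p}$ be finite simplicial complexes with oriented simplices, the simplices of $X_t$ carrying the same orientations as in $X_{t+p}$. Let $\mathscr{S}_{t+p}$ be a cellular sheaf on $X_{t+p}$ whose stalks are finite-dimensional inner product spaces over $\mathbb{R}$ or $\mathbb{C}$, and let $\mathscr{S}_t$ be its pullback to $X_t$. The projection cochain map $\pi: C^\bullet(X_{t+p};\mathscr{S}_{t+p})\to C^\bullet(X_t;\mathscr{S}_t)$ induces a map $\pi^\bullet: H^q(X_{t+p};\mathscr{S}_{t+p})\to H^q(X_t;\mathscr{S}_t)$ on sheaf cohomology, and the persistent sheaf Laplacian satisfies $$\operatorname{nullity}(\Delta_q^{t,p}) = \dim \operatorname{im}\, \pi^\bullet\big(H^q(X_{t+p};\mathscr{S}_{t+p})\big).$$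
   Context: A cellular sheaf $\mathscr{S}$ on a simplicial complex $X$ assigns to each simplex $\sigma$ a finite-dimensional vector space $\mathscr{S}(\sigma)$ and to each face relation $\sigma\leqslant\tau$ a linear map $\mathscr{S}_{\sigma\leqslant\tau}$, functorially (identity on $\sigma\leqslant\sigma$, compatible with composition). The pullback $\mathscr{S}_t$ has the same stalks and restriction maps as $\mathscr{S}_{t+p}$ on simplices and face relations of $X_t$. $C^q(X;\mathscr{S})=\bigoplus_{\dim\sigma=q}\mathscr{S}(\sigma)$, with inner product making distinct stalks orthogonal; thus $C^q(X_t;\mathscr{S}_t)$ is identified with the subspace of $C^q(X_{t+p};\mathscr{S}_{t+p})$ spanned by stalks over simplices of $X_t$, and $\pi$ is the orthogonal projection onto it. Signed incidence: for $\tau=[v_0,\dots,v_n]$ and $\sigma=[v_0,\dots,\hat v_i,\dots,v_n]$, $[\sigma:\tau]=(-1)^i$ (or $(-1)^{i+1}$ if $\sigma$ is oppositely oriented), and $0$ unless $\sigma$ is a codimension-one face. Coboundary: $d_q|_{\mathscr{S}(\sigma)}=\sum_{\sigma\leqslant\tau}[\sigma:\tau]\mathscr{S}_{\sigma\leqslant\tau}$; $H^q=\ker d_q/\operatorname{im} d_{q-1}$. Write $d^t, d^{t+p}$ for the coboundaries of the two complexes. Persistent sheaf Laplacian: let $\mathbb{C}^{t,p}_{q+1}=\{e\in C^{q+1}(X_{t+p};\mathscr{S}_{t+p}) : (d_q^{t+p})^*(e)\in C^q(X_t;\mathscr{S}_t)\}$, let $\eth_q^{t,p}: C^q(X_t;\mathscr{S}_t)\to\mathbb{C}^{t,p}_{q+1}$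 be the adjoint of $(d_q^{t+p})^*|_{\mathbb{C}^{t,p}_{q+1}}:\mathbb{C}^{t,p}_{q+1}\to C^q(X_t;\mathscr{S}_t)$, and set $\Delta_q^{t,p}=(\eth_q^{t,p})^*\eth_q^{t,p}+d_{q-1}^t(d_{q-1}^t)^*$, an operator on $C^q(X_t;\mathscr{S}_t)$. *)

theory Defs
  imports "HOL-Combinatorics.Permutations" "HOL-Library.Function_Algebras" "Jordan_Normal_Form.Conjugate"
begin

text \<open>An oriented simplex is a nonempty list of distinct vertices; the list order
  fixes the orientation.  A finite oriented simplicial complex is a finite set of
  such lists, containing exactly one oriented representative for each of its
  simplices (vertex sets), and closed under taking nonempty faces.\<close>

definition oriented_complex :: "'v list set \<Rightarrow> bool" where
  "oriented_complex X \<longleftrightarrow>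
     finite X \<and>
     (\<forall>\<sigma>\<in>X. \<sigma> \<noteq> [] \<and> distinct \<sigma>) \<and>
     (\<forall>\<sigma>\<in>X. \<forall>\<sigma>'\<in>X. set \<sigma> = set \<sigma>' \<longrightarrow> \<sigma> = \<sigma>') \<and>
     (\<forall>\<tau>\<in>X. \<forall>S. S \<noteq> {} \<and> S \<subseteq> set \<tau> \<longrightarrow> (\<exists>\<sigma>\<in>X. set \<sigma> = S))"

definition perm_sign :: "'v list \<Rightarrow> 'v list \<Rightarrow> int" where
  "perm_sign xs ys =
     sign (\<lambda>j. if j < length xs then (THE m. m < length xs \<and> xs ! m = ys ! j) else j)"

text \<open>Signed incidence number [\<sigma>:\<tau>]: if \<sigma> is \<tau> = [v0,...,vn] with v_i removed
  (up to orientation), it is (-1)^i, resp. (-1)^(i+1) if \<sigma> is oppositely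
  oriented; otherwise 0.\<close>
definition incidence :: "'v list \<Rightarrow> 'v list \<Rightarrow> 'a::ring_1" where
  "incidence \<sigma> \<tau> =
     (if length \<tau> = Suc (length \<sigma>) \<and> set \<sigma> \<subseteq> set \<tau> \<and> distinct \<sigma> \<and> distinct \<tau> then
        (let i = (THE i. i < length \<tau> \<and> \<tau> ! i \<notin> set \<sigma>);
             \<sigma>' = take i \<tau> @ drop (Suc i) \<tau>
         in (-1) ^ i * of_int (perm_sign \<sigma>' \<sigma>))
      else 0)"

text \<open>The stalk over \<sigma> is 'a^(n \<sigma>) with its standard inner product; the
  restriction map for a face relation \<sigma> \<le> \<tau> is the (n \<tau> x n \<sigma>)-matrix with
  entries F \<sigma> \<tau> j i.\<close>

definition cellular_sheaf ::
  "'v list set \<Rightarrow> ('v list \<Rightarrow> nat) \<Rightarrow> ('v list \<Rightarrow> 'v list \<Rightarrow> nat \<Rightarrow> nat \<Rightarrow> 'a::ring_1) \<Rightarrow> bool" where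
  "cellular_sheaf X n F \<longleftrightarrow>
     (\<forall>\<sigma>\<in>X. \<forall>j<n \<sigma>. \<forall>i<n \<sigma>. F \<sigma> \<sigma> j i = (if i = j then 1 else 0)) \<and>
     (\<forall>\<rho>\<in>X. \<forall>\<sigma>\<in>X. \<forall>\<tau>\<in>X. set \<rho> \<subseteq> set \<sigma> \<and> set \<sigma> \<subseteq> set \<tau> \<longrightarrow>
        (\<forall>k<n \<tau>. \<forall>i<n \<rho>. F \<rho> \<tau> k i = (\<Sum>j<n \<sigma>. F \<sigma> \<tau> k j * F \<rho> \<sigma> j i)))"

text \<open>Cochains on simplices with k vertices (i.e. of dimension k - 1):
  C^(k-1)(X; S) as functions supported on stalk coordinates of those simplices.\<close>
definition cochains ::
  "'v list set \<Rightarrow> ('v list \<Rightarrow> nat) \<Rightarrow> nat \<Rightarrow> ('v list \<Rightarrow> nat \<Rightarrow> 'a::zero) set" where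
  "cochains X n k = {f. \<forall>\<sigma> i. f \<sigma> i \<noteq> 0 \<longrightarrow> \<sigma> \<in> X \<and> length \<sigma> = k \<and> i < n \<sigma>}"

definition coboundary ::
  "'v list set \<Rightarrow> ('v list \<Rightarrow> nat) \<Rightarrow> ('v list \<Rightarrow> 'v list \<Rightarrow> nat \<Rightarrow> nat \<Rightarrow> 'a::ring_1)
     \<Rightarrow> nat \<Rightarrow> ('v list \<Rightarrow> nat \<Rightarrow> 'a) \<Rightarrow> ('v list \<Rightarrow> nat \<Rightarrow> 'a)" where
  "coboundary X n F k f = (\<lambda>\<tau> j.
     if \<tau> \<in> X \<and> length \<tau> = Suc k \<and> j < n \<tau> then
       (\<Sum>\<sigma>\<in>{\<sigma>\<in>X. length \<sigma> = k}. incidence \<sigma> \<tau> * (\<Sum>i<n \<sigma>. F \<sigma> \<tau> j i * f \<sigma> i))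
     else 0)"

definition cinner ::
  "'v list set \<Rightarrow> ('v list \<Rightarrow> nat) \<Rightarrow> ('v list \<Rightarrow> nat \<Rightarrow> 'a::conjugatable_ring)
     \<Rightarrow> ('v list \<Rightarrow> nat \<Rightarrow> 'a) \<Rightarrow> 'a" where
  "cinner X n f g = (\<Sum>\<sigma>\<in>X. \<Sum>i<n \<sigma>. f \<sigma> i * conjugate (g \<sigma> i))"

definition adjoint_at ::
  "('b \<Rightarrow> 'b \<Rightarrow> 'a) \<Rightarrow> 'b set \<Rightarrow> ('b \<Rightarrow> 'b) \<Rightarrow> 'b \<Rightarrow> 'b" where
  "adjoint_at ip U A x = (THE y. y \<in> U \<and> (\<forall>u\<in>U. ip (A u) x = ip u y))"

definition proj_sub :: "'v list set \<Rightarrow> ('v list \<Rightarrow> nat \<Rightarrow> 'a::zero) \<Rightarrow> ('v list \<Rightarrow> nat \<Rightarrow> 'a)" where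
  "proj_sub Xt f = (\<lambda>\<sigma> i. if \<sigma> \<in> Xt then f \<sigma> i else 0)"

definition cdim :: "('v list \<Rightarrow> nat \<Rightarrow> 'a::field) set \<Rightarrow> nat" where
  "cdim S = vector_space.dim (\<lambda>c f. \<lambda>\<sigma> i. c * f \<sigma> i) S"

text \<open>q-dimensional simplices are those with q+1 vertices.  X is X_(t+p), Xt is X_t,
  (n, F) is the sheaf S_(t+p); its pullback S_t is (n, F) restricted to Xt.\<close>
definition persistent_sheaf_laplacian ::
  "'v list set \<Rightarrow> 'v list set \<Rightarrow> ('v list \<Rightarrow> nat) \<Rightarrow> ('v list \<Rightarrow> 'v list \<Rightarrow> nat \<Rightarrow> nat \<Rightarrow> 'a::conjugatable_field)
     \<Rightarrow> nat \<Rightarrow> ('v list \<Rightarrow> nat \<Rightarrow> 'a) \<Rightarrow> ('v list \<Rightarrow> nat \<Rightarrow> 'a)" where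
  "persistent_sheaf_laplacian X Xt n F q =
     (let ip = cinner X n;
          k = Suc q;
          dstar = adjoint_at ip (cochains X n k) (coboundary X n F k);
          Cpq = {e \<in> cochains X n (Suc k). dstar e \<in> cochains Xt n k};
          eth = adjoint_at ip Cpq dstar;
          eth_star = adjoint_at ip (cochains Xt n k) eth;
          dt_star = adjoint_at ip (cochains Xt n q) (coboundary Xt n F q)
      in (\<lambda>x. eth_star (eth x) + coboundary Xt n F q (dt_star x)))"

text \<open>Dimension of the image of pi^\<bullet> : H^q(X; S) \<rightarrow> H^q(Xt; S_t), where
  H^q(Xt) = Z/B with B = im d^t_(q-1); the image is (pi(Z^q(X)) + B)/B,
  whose dimension is dim(pi(Z^q(X)) + B) - dim B.\<close>
definition cohom_image_dim ::
  "'v list set \<Rightarrow> 'v list set \<Rightarrow> ('v list \<Rightarrow> nat) \<Rightarrow> ('v list \<Rightarrow> 'v list \<Rightarrow> nat \<Rightarrow> nat \<Rightarrow> 'a::field)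
     \<Rightarrow> nat \<Rightarrow> nat" where
  "cohom_image_dim X Xt n F q =
     (let k = Suc q;
          Z = {z \<in> cochains X n k. coboundary X n F k z = 0};
          B = coboundary Xt n F q ` cochains Xt n q
      in cdim {a + b | a b. a \<in> proj_sub Xt ` Z \<and> b \<in> B} - cdim B)"

end

theory Submission
  imports Defs
begin

text \<open>Harmonic cochains of the persistent Laplacian are, by
  \<open>\<langle>\<Delta> x, x\<rangle> = \<parallel>\<eth> x\<parallel>\<^sup>2 + \<parallel>(d\<^sup>t)\<^sup>* x\<parallel>\<^sup>2\<close>, the cochains on \<open>X\<^sub>t\<close> lying in \<open>M = ker \<eth>\<close> and
  orthogonal to \<open>B = im d\<^sup>t\<close>; here \<open>ker \<eth>\<close> is the orthogonal complement in \<open>C\<^sup>q(X\<^sub>t)\<close> of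
  \<open>d\<^sup>*(\<bbbC>\<^sup>t\<^sup>,\<^sup>p)\<close>.  The heart of the argument is that M is exactly the projection
  \<open>\<pi>(Z\<^sup>q)\<close> of the cocycles of the big complex: a cochain \<open>v \<in> M\<close> can be corrected by a
  cochain vanishing on \<open>X\<^sub>t\<close> so that its coboundary r becomes orthogonal to all coboundaries
  of such cochains; then \<open>d\<^sup>* r\<close> lives on \<open>X\<^sub>t\<close>, i.e. \<open>r \<in> \<bbbC>\<^sup>t\<^sup>,\<^sup>p\<close>, and
  \<open>\<langle>r, r\<rangle> = \<langle>v, d\<^sup>* r\<rangle> = 0\<close>.  As \<open>B \<subseteq> \<pi>(Z\<^sup>q)\<close> because \<open>d \<circ> d = 0\<close>, the image of \<open>\<pi>\<^sup>\<bullet>\<close>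
  has dimension \<open>dim M - dim B = dim (M \<ominus> B)\<close>, the nullity of the Laplacian.\<close>

section \<open>Signs of reorderings\<close>

definition reordering :: "'v list \<Rightarrow> 'v list \<Rightarrow> bool" where
  "reordering xs ys \<longleftrightarrow> distinct xs \<and> distinct ys \<and> set xs = set ys"

definition reorder_perm :: "'v list \<Rightarrow> 'v list \<Rightarrow> nat \<Rightarrow> nat" where
  "reorder_perm xs ys = (\<lambda>j. if j < length xs then (THE m. m < length xs \<and> xs ! m = ys ! j) else j)"

lemma perm_sign_eq_sign_reorder_perm: "perm_sign xs ys = sign (reorder_perm xs ys)"
  unfolding perm_sign_def reorder_perm_def ..

lemma reordering_length: "reordering xs ys \<Longrightarrow> length xs = length ys"
  unfolding reordering_def by (metis distinct_card)

lemma reordering_trans: "reordering xs ys \<Longrightarrow> reordering ys zs \<Longrightarrow> reordering xs zs"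
  unfolding reordering_def by auto

lemma the_index_eq:
  assumes "distinct xs" "m < length xs" "xs ! m = y"
  shows "(THE m. m < length xs \<and> xs ! m = y) = m"
  using assms by (auto intro!: the_equality simp: nth_eq_iff_index_eq)

lemma reorder_perm_nth:
  assumes "reordering xs ys" "j < length xs"
  shows "reorder_perm xs ys j < length xs \<and> xs ! reorder_perm xs ys j = ys ! j"
proof -
  have "ys ! j \<in> set xs"
    using assms reordering_length[OF assms(1)] unfolding reordering_def by (metis nth_mem)
  then obtain m where "m < length xs" "xs ! m = ys ! j"
    by (auto simp: in_set_conv_nth)
  with assms show ?thesis
    using the_index_eq[of xs m] unfolding reorder_perm_def reordering_def by auto
qed

lemma reorder_perm_eqI:
  assumes "reordering xs ys" "j < length xs" "m < length xs" "xs ! m = ys ! j"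
  shows "reorder_perm xs ys j = m"
  using reorder_perm_nth[OF assms(1,2)] assms unfolding reordering_def
  by (metis nth_eq_iff_index_eq)

lemma reorder_perm_permutes:
  assumes "reordering xs ys"
  shows "reorder_perm xs ys permutes {..<length xs}"
proof (rule bij_imp_permutes)
  let ?p = "reorder_perm xs ys"
  have inj: "inj_on ?p {..<length xs}"
  proof
    fix a b assume "a \<in> {..<length xs}" "b \<in> {..<length xs}" "?p a = ?p b"
    then have "ys ! a = ys ! b" "a < length ys" "b < length ys"
      using reorder_perm_nth[OF assms] reordering_length[OF assms] by (metis lessThan_iff)+
    then show "a = b"
      using assms unfolding reordering_def by (simp add: nth_eq_iff_index_eq)
  qed
  moreover have "?p ` {..<length xs} \<subseteq> {..<length xs}"
    using reorder_perm_nth[OF assms] by auto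
  ultimately show "bij_betw ?p {..<length xs} {..<length xs}"
    using endo_inj_surj[of "{..<length xs}" ?p] by (simp add: bij_betw_def)
  show "\<And>j. j \<notin> {..<length xs} \<Longrightarrow> ?p j = j"
    unfolding reorder_perm_def by auto
qed

lemma permutation_reorder_perm: "reordering xs ys \<Longrightarrow> permutation (reorder_perm xs ys)"
  using reorder_perm_permutes permutation_permutes by blast

lemma reorder_perm_trans:
  assumes "reordering xs ys" "reordering ys zs"
  shows "reorder_perm xs zs = reorder_perm xs ys \<circ> reorder_perm ys zs"
proof
  fix j
  have len: "length xs = length ys" "length ys = length zs"
    using assms by (simp_all add: reordering_length)
  show "reorder_perm xs zs j = (reorder_perm xs ys \<circ> reorder_perm ys zs) j"
  proof (cases "j < length xs")
    case True
    with assms len show ?thesis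
      using reorder_perm_nth[OF assms(2), of j] reorder_perm_nth[OF assms(1), of "reorder_perm ys zs j"]
      by (auto intro!: reorder_perm_eqI[OF reordering_trans[OF assms]])
  next
    case False
    with len show ?thesis
      unfolding reorder_perm_def by auto
  qed
qed

lemma perm_sign_trans:
  assumes "reordering xs ys" "reordering ys zs"
  shows "perm_sign xs zs = perm_sign xs ys * perm_sign ys zs"
  unfolding perm_sign_eq_sign_reorder_perm reorder_perm_trans[OF assms]
  by (rule sign_compose[OF permutation_reorder_perm[OF assms(1)] permutation_reorder_perm[OF assms(2)]])

lemma perm_sign_self:
  assumes "distinct xs"
  shows "perm_sign xs xs = 1"
proof -
  have "reorder_perm xs xs = id"
    by (auto simp: fun_eq_iff reorder_perm_def the_index_eq[OF assms])
  then show ?thesis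
    by (simp add: perm_sign_eq_sign_reorder_perm)
qed

lemma perm_sign_swap:
  assumes "distinct (a # b # zs)"
  shows "perm_sign (a # b # zs) (b # a # zs) = -1"
proof -
  have re: "reordering (a # b # zs) (b # a # zs)"
    using assms unfolding reordering_def by auto
  have "reorder_perm (a # b # zs) (b # a # zs) = Transposition.transpose 0 1"
  proof
    fix j
    show "reorder_perm (a # b # zs) (b # a # zs) j = Transposition.transpose 0 1 j"
    proof (cases "j < length (a # b # zs)")
      case True
      then consider "j = 0" | "j = 1" | j' where "j = Suc (Suc j')"
        by (metis One_nat_def not0_implies_Suc)
      then show ?thesis
        by cases (use True reorder_perm_eqI[OF re, of j] in \<open>auto simp: transpose_def\<close>)
    qed (auto simp: reorder_perm_def transpose_def)
  qed
  then show ?thesis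
    by (simp add: perm_sign_eq_sign_reorder_perm sign_swap_id)
qed

definition shift_perm :: "(nat \<Rightarrow> nat) \<Rightarrow> nat \<Rightarrow> nat" where
  "shift_perm p = (\<lambda>j. case j of 0 \<Rightarrow> 0 | Suc j' \<Rightarrow> Suc (p j'))"

lemma sign_shift_perm:
  assumes "p permutes S" "finite S"
  shows "permutation (shift_perm p) \<and> sign (shift_perm p) = sign p"
  using assms
proof (induct rule: permutes_induct)
  case id
  have "shift_perm id = id"
    by (auto simp: shift_perm_def fun_eq_iff split: nat.split)
  then show ?case
    using permutation_id by metis
next
  case (swap a b p)
  have shift: "shift_perm (Transposition.transpose a b \<circ> p)
      = Transposition.transpose (Suc a) (Suc b) \<circ> shift_perm p"
    by (auto simp: shift_perm_def fun_eq_iff transpose_def split: nat.split)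
  have p: "permutation p"
    using swap(5) assms(2) permutation_permutes by blast
  have tr: "permutation (Transposition.transpose (Suc a) (Suc b))" "permutation (Transposition.transpose a b)"
    by (simp_all add: permutation_swap_id)
  have "permutation (Transposition.transpose (Suc a) (Suc b) \<circ> shift_perm p)"
    using permutation_compose[OF tr(1)] swap(4) by blast
  moreover have "sign (Transposition.transpose (Suc a) (Suc b) \<circ> shift_perm p) = sign (Transposition.transpose a b \<circ> p)"
    using sign_compose[OF tr(1), of "shift_perm p"] sign_compose[OF tr(2) p] swap(3,4)
    by (simp add: sign_swap_id)
  ultimately show ?case
    unfolding shift by blast
qed

lemma perm_sign_Cons:
  assumes "reordering xs ys" "a \<notin> set xs"
  shows "perm_sign (a # xs) (a # ys) = perm_sign xs ys"
proof -
  have re: "reordering (a # xs) (a # ys)"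
    using assms unfolding reordering_def by auto
  have "reorder_perm (a # xs) (a # ys) = shift_perm (reorder_perm xs ys)"
  proof
    fix j
    show "reorder_perm (a # xs) (a # ys) j = shift_perm (reorder_perm xs ys) j"
    proof (cases j)
      case 0
      then show ?thesis
        using reorder_perm_eqI[OF re, of 0 0] by (simp add: shift_perm_def)
    next
      case (Suc j')
      show ?thesis
      proof (cases "j' < length xs")
        case True
        then show ?thesis
          using reorder_perm_eqI[OF re, of j "Suc (reorder_perm xs ys j')"]
            reorder_perm_nth[OF assms(1) True] Suc
          by (simp add: shift_perm_def)
      qed (use Suc in \<open>simp add: shift_perm_def reorder_perm_def\<close>)
    qed
  qed
  then show ?thesis
    using sign_shift_perm[OF reorder_perm_permutes[OF assms(1)]]
    by (simp add: perm_sign_eq_sign_reorder_perm)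
qed

lemma perm_sign_swap_head:
  assumes "reordering t (v # w # r)"
  shows "perm_sign t (w # v # r) = - perm_sign t (v # w # r)"
proof -
  have swap: "reordering (v # w # r) (w # v # r)"
    using assms unfolding reordering_def by auto
  have "perm_sign (v # w # r) (w # v # r) = -1"
    using assms unfolding reordering_def by (intro perm_sign_swap) simp
  then show ?thesis
    using perm_sign_trans[OF assms swap] by simp
qed

lemma remove_nth_props:
  assumes "distinct t" "i < length t"
  shows "distinct (take i t @ drop (Suc i) t)" "t ! i \<notin> set (take i t @ drop (Suc i) t)"
    and "set t = insert (t ! i) (set (take i t @ drop (Suc i) t))"
proof -
  have t: "t = take i t @ t ! i # drop (Suc i) t"
    using assms(2) by (rule id_take_nth_drop)
  from assms(1) show "distinct (take i t @ drop (Suc i) t)" "t ! i \<notin> set (take i t @ drop (Suc i) t)"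
    by (subst (asm) t, simp)+
  show "set t = insert (t ! i) (set (take i t @ drop (Suc i) t))"
    by (subst t) auto
qed

lemma perm_sign_remove_nth:
  assumes "distinct t" "i < length t"
  shows "perm_sign t (t ! i # (take i t @ drop (Suc i) t)) = (-1) ^ i"
  using assms
proof (induct t arbitrary: i)
  case (Cons x t)
  show ?case
  proof (cases i)
    case 0
    then show ?thesis
      using perm_sign_self[OF Cons(2)] by simp
  next
    case (Suc i')
    let ?r = "take i' t @ drop (Suc i') t" and ?y = "t ! i'"
    have t: "distinct t" "x \<notin> set t" "i' < length t"
      using Cons(2,3) Suc by auto
    note r = remove_nth_props[OF t(1,3)]
    have "perm_sign (x # t) (?y # x # ?r)
        = perm_sign (x # t) (x # ?y # ?r) * perm_sign (x # ?y # ?r) (?y # x # ?r)"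
      by (rule perm_sign_trans) (use r t in \<open>auto simp: reordering_def\<close>)
    also have "perm_sign (x # t) (x # ?y # ?r) = perm_sign t (?y # ?r)"
      by (rule perm_sign_Cons) (use r t in \<open>auto simp: reordering_def\<close>)
    also have "\<dots> = (-1) ^ i'"
      using Cons(1)[OF t(1,3)] .
    also have "perm_sign (x # ?y # ?r) (?y # x # ?r) = -1"
      by (rule perm_sign_swap) (use r t in auto)
    finally show ?thesis
      using Suc by simp
  qed
qed simp

section \<open>Incidence numbers\<close>

lemma codim_one_faceE:
  assumes "distinct r" "distinct s" "set r \<subseteq> set s" "length s = Suc (length r)"
  obtains x where "x \<notin> set r" "set s = insert x (set r)"
proof -
  have card: "card (set s) = Suc (card (set r))"
    using assms by (simp add: distinct_card)
  then have "set s - set r \<noteq> {}"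
    using assms(3) by (metis Diff_eq_empty_iff card_seteq finite_set lessI less_irrefl subset_antisym)
  then obtain x where x: "x \<in> set s" "x \<notin> set r"
    by blast
  have "insert x (set r) = set s"
    using x assms(3) card by (intro card_subset_eq) auto
  with x that show ?thesis
    by blast
qed

lemma incidence_nonzeroD:
  assumes "incidence s t \<noteq> (0::'a::ring_1)"
  shows "length t = Suc (length s)" "set s \<subseteq> set t" "distinct s" "distinct t"
  using assms unfolding incidence_def by (auto split: if_splits)

lemma incidence_eq_perm_sign:
  assumes "distinct s" "distinct t" "length t = Suc (length s)" "set s \<subseteq> set t"
    and "v \<in> set t" "v \<notin> set s"
  shows "(incidence s t :: 'a::ring_1) = of_int (perm_sign t (v # s))"
proof -
  obtain x where x: "x \<notin> set s" "set t = insert x (set s)"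
    using codim_one_faceE[OF assms(1,2,4,3)] .
  then have "x = v"
    using assms(5,6) by auto
  obtain i where i: "i < length t" "t ! i = v"
    using assms(5) by (metis in_set_conv_nth)
  have the_i: "(THE i. i < length t \<and> t ! i \<notin> set s) = i"
  proof (rule the_equality)
    fix j assume j: "j < length t \<and> t ! j \<notin> set s"
    then have "t ! j = v"
      using x \<open>x = v\<close> by (metis insertE nth_mem)
    then show "j = i"
      using i assms(2) j by (metis nth_eq_iff_index_eq)
  qed (use i assms(6) in simp)
  let ?s = "take i t @ drop (Suc i) t"
  note s = remove_nth_props[OF assms(2) i(1), unfolded i(2)]
  have "set ?s = set s"
    using s(2,3) x \<open>x = v\<close> assms(6) by (metis insert_ident)
  then have "perm_sign t (v # s) = perm_sign t (v # ?s) * perm_sign (v # ?s) (v # s)"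
    using s assms by (intro perm_sign_trans) (auto simp: reordering_def)
  also have "perm_sign (v # ?s) (v # s) = perm_sign ?s s"
    using s assms \<open>set ?s = set s\<close> by (intro perm_sign_Cons) (auto simp: reordering_def)
  also have "perm_sign t (v # ?s) = (-1) ^ i"
    using perm_sign_remove_nth[OF assms(2) i(1)] i(2) by simp
  finally show ?thesis
    using assms the_i unfolding incidence_def by (simp add: Let_def)
qed

lemma incidence_mult_incidence:
  assumes "distinct r" "distinct s" "distinct t"
    and "w \<notin> set r" "set s = insert w (set r)" "v \<notin> set s" "set t = insert v (set s)"
  shows "incidence s t * incidence r s = (of_int (perm_sign t (v # w # r)) :: 'a::ring_1)"
proof -
  have len: "length s = Suc (length r)" "length t = Suc (length s)"
    using assms by (metis distinct_card card_insert_disjoint finite_set)+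
  have "incidence s t = (of_int (perm_sign t (v # s)) :: 'a)"
    by (rule incidence_eq_perm_sign) (use assms len in auto)
  moreover have "incidence r s = (of_int (perm_sign s (w # r)) :: 'a)"
    by (rule incidence_eq_perm_sign) (use assms len in auto)
  ultimately have "incidence s t * incidence r s = (of_int (perm_sign t (v # s) * perm_sign s (w # r)) :: 'a)"
    by simp
  also have "perm_sign t (v # s) * perm_sign s (w # r) = perm_sign t (v # w # r)"
    using assms perm_sign_Cons[of s "w # r" v] perm_sign_trans[of t "v # s" "v # w # r"]
    by (auto simp: reordering_def)
  finally show ?thesis .
qed

lemma incidence_mult_incidence_nonzeroE:
  assumes "incidence s t * incidence r s \<noteq> (0::'a::ring_1)"
  obtains w v where "distinct r" "distinct s" "distinct t"
    and "w \<notin> set r" "set s = insert w (set r)" "v \<notin> set s" "set t = insert v (set s)"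
proof -
  have "incidence s t \<noteq> (0::'a)" "incidence r s \<noteq> (0::'a)"
    using assms by auto
  note st = incidence_nonzeroD[OF this(1)] and rs = incidence_nonzeroD[OF this(2)]
  obtain w where "w \<notin> set r" "set s = insert w (set r)"
    using codim_one_faceE[OF rs(3,4,2,1)] .
  moreover obtain v where "v \<notin> set s" "set t = insert v (set s)"
    using codim_one_faceE[OF st(3,4,2,1)] .
  ultimately show ?thesis
    using that rs st by blast
qed

text \<open>The two faces of codimension one between r and t, obtained by adding either of the two
  missing vertices to r, contribute opposite signs.\<close>

lemma sum_incidence_mult_incidence:
  assumes X: "oriented_complex X" and t: "t \<in> X"
  shows "(\<Sum>s\<in>{s\<in>X. length s = m}. (incidence s t :: 'a::ring_1) * incidence r s) = 0"
proof (cases "\<exists>s\<in>{s\<in>X. length s = m}. (incidence s t :: 'a) * incidence r s \<noteq> 0")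
  case True
  then obtain s1 where s1: "s1 \<in> X" "length s1 = m" "(incidence s1 t :: 'a) * incidence r s1 \<noteq> 0"
    by auto
  from s1(3) obtain w v where faces: "distinct r" "distinct s1" "distinct t"
    "w \<notin> set r" "set s1 = insert w (set r)" "v \<notin> set s1" "set t = insert v (set s1)"
    by (rule incidence_mult_incidence_nonzeroE)
  have Xfin: "finite X" and Xdist: "\<forall>s\<in>X. distinct s"
    and Xuniq: "\<forall>s\<in>X. \<forall>s'\<in>X. set s = set s' \<longrightarrow> s = s'"
    using X unfolding oriented_complex_def by auto
  obtain s2 where s2: "s2 \<in> X" "set s2 = insert v (set r)"
    using X t faces unfolding oriented_complex_def by (metis insert_not_empty insert_mono subset_insertI)
  have "distinct s2" "s1 \<noteq> s2"
    using Xdist s2 faces by auto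
  moreover have "length s2 = m"
    using \<open>distinct s2\<close> s2 faces s1(2) by (metis distinct_card card_insert_disjoint finite_set insertCI)
  moreover have "(incidence s t :: 'a) * incidence r s = 0"
    if "s \<in> {s\<in>X. length s = m}" "s \<noteq> s1" "s \<noteq> s2" for s
  proof (rule ccontr)
    assume "(incidence s t :: 'a) * incidence r s \<noteq> 0"
    then obtain x y where "set s = insert x (set r)" "set t = insert y (set s)" "x \<notin> set r"
      by (elim incidence_mult_incidence_nonzeroE) blast
    then have "set s = set s1 \<or> set s = set s2"
      using faces s2 by auto
    then show False
      using Xuniq that s1 s2 by auto
  qed
  ultimately have "(\<Sum>s\<in>{s\<in>X. length s = m}. (incidence s t :: 'a) * incidence r s)
      = incidence s1 t * incidence r s1 + incidence s2 t * incidence r s2"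
    using Xfin s1 s2 by (subst sum.mono_neutral_right[of _ "{s1, s2}"]) auto
  also have "incidence s1 t * incidence r s1 = (of_int (perm_sign t (v # w # r)) :: 'a)"
    by (rule incidence_mult_incidence[OF faces])
  also have "incidence s2 t * incidence r s2 = (of_int (perm_sign t (w # v # r)) :: 'a)"
  proof (rule incidence_mult_incidence[OF faces(1) \<open>distinct s2\<close> faces(3)])
    show "v \<notin> set r" "set s2 = insert v (set r)" "w \<notin> set s2" "set t = insert w (set s2)"
      using faces s2(2) by auto
  qed
  also have "of_int (perm_sign t (v # w # r)) + of_int (perm_sign t (w # v # r)) = (0::'a)"
    using perm_sign_swap_head[of t v w r] faces by (auto simp: reordering_def)
  finally show ?thesis .
qed simp

section \<open>The cochain complex\<close>

lemma sum_swap4: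
  "(\<Sum>a\<in>A. \<Sum>b\<in>B a. \<Sum>c\<in>C. \<Sum>d\<in>D c. G a b c d) = (\<Sum>c\<in>C. \<Sum>d\<in>D c. \<Sum>a\<in>A. \<Sum>b\<in>B a. G a b c d)"
proof -
  have "(\<Sum>a\<in>A. \<Sum>b\<in>B a. \<Sum>c\<in>C. \<Sum>d\<in>D c. G a b c d) = (\<Sum>a\<in>A. \<Sum>c\<in>C. \<Sum>b\<in>B a. \<Sum>d\<in>D c. G a b c d)"
    by (intro sum.cong refl sum.swap)
  also have "\<dots> = (\<Sum>c\<in>C. \<Sum>a\<in>A. \<Sum>d\<in>D c. \<Sum>b\<in>B a. G a b c d)"
    by (subst sum.swap) (intro sum.cong refl sum.swap)
  also have "\<dots> = (\<Sum>c\<in>C. \<Sum>d\<in>D c. \<Sum>a\<in>A. \<Sum>b\<in>B a. G a b c d)"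
    by (intro sum.cong refl sum.swap)
  finally show ?thesis .
qed

lemma incidence_mult_restriction_comp:
  fixes F :: "'v list \<Rightarrow> 'v list \<Rightarrow> nat \<Rightarrow> nat \<Rightarrow> 'a::ring_1"
  assumes "cellular_sheaf X n F" "\<rho> \<in> X" "\<sigma> \<in> X" "t \<in> X" "j < n t" "i < n \<rho>"
  shows "incidence \<sigma> t * incidence \<rho> \<sigma> * (\<Sum>l<n \<sigma>. F \<sigma> t j l * F \<rho> \<sigma> l i)
    = incidence \<sigma> t * incidence \<rho> \<sigma> * F \<rho> t j i"
proof (cases "incidence \<sigma> t * incidence \<rho> \<sigma> = (0::'a)")
  case False
  then have "incidence \<sigma> t \<noteq> (0::'a)" "incidence \<rho> \<sigma> \<noteq> (0::'a)"
    by auto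
  then have "set \<rho> \<subseteq> set \<sigma>" "set \<sigma> \<subseteq> set t"
    by (simp_all add: incidence_nonzeroD)
  with assms have "F \<rho> t j i = (\<Sum>l<n \<sigma>. F \<sigma> t j l * F \<rho> \<sigma> l i)"
    unfolding cellular_sheaf_def by blast
  then show ?thesis
    by simp
qed simp

theorem coboundary_coboundary:
  fixes c :: "'v list \<Rightarrow> nat \<Rightarrow> 'a::field"
  assumes X: "oriented_complex X" and S: "cellular_sheaf X n F"
  shows "coboundary X n F (Suc m) (coboundary X n F m c) = 0"
proof (intro ext)
  fix t j
  define X0 where "X0 = {\<rho>\<in>X. length \<rho> = m}"
  define X1 where "X1 = {\<sigma>\<in>X. length \<sigma> = Suc m}"
  show "coboundary X n F (Suc m) (coboundary X n F m c) t j = 0 t j"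
  proof (cases "t \<in> X \<and> length t = Suc (Suc m) \<and> j < n t")
    case True
    have "coboundary X n F (Suc m) (coboundary X n F m c) t j
        = (\<Sum>\<sigma>\<in>X1. \<Sum>l<n \<sigma>. \<Sum>\<rho>\<in>X0. \<Sum>i<n \<rho>.
             incidence \<sigma> t * incidence \<rho> \<sigma> * (F \<sigma> t j l * F \<rho> \<sigma> l i) * c \<rho> i)"
      using True unfolding coboundary_def X0_def[symmetric] X1_def[symmetric]
      by (auto simp: X1_def sum_distrib_left mult_ac intro!: sum.cong)
    also have "\<dots> = (\<Sum>\<rho>\<in>X0. \<Sum>i<n \<rho>. \<Sum>\<sigma>\<in>X1.
        incidence \<sigma> t * incidence \<rho> \<sigma> * (\<Sum>l<n \<sigma>. F \<sigma> t j l * F \<rho> \<sigma> l i) * c \<rho> i)"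
      unfolding sum_swap4[where A = X1] by (simp add: sum_distrib_left sum_distrib_right mult_ac)
    also have "\<dots> = (\<Sum>\<rho>\<in>X0. \<Sum>i<n \<rho>. (\<Sum>\<sigma>\<in>X1. incidence \<sigma> t * incidence \<rho> \<sigma>) * F \<rho> t j i * c \<rho> i)"
      using True incidence_mult_restriction_comp[OF S]
      by (auto simp: X0_def X1_def sum_distrib_right intro!: sum.cong)
    also have "\<dots> = 0"
    proof -
      have "(\<Sum>\<sigma>\<in>X1. incidence \<sigma> t * incidence \<rho> \<sigma>) = (0::'a)" for \<rho>
        using sum_incidence_mult_incidence[OF X] True unfolding X1_def by blast
      then show ?thesis
        by simp
    qed
    finally show ?thesis
      by simp
  qed (auto simp: coboundary_def)
qed

lemma coboundary_in_cochains: "coboundary Y n F m f \<in> cochains Y n (Suc m)"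
  unfolding coboundary_def cochains_def by auto

lemma proj_sub_in_cochains: "f \<in> cochains X n m \<Longrightarrow> proj_sub Xt f \<in> cochains Xt n m"
  unfolding proj_sub_def cochains_def by auto

lemma proj_sub_cochains: "f \<in> cochains Xt n m \<Longrightarrow> proj_sub Xt f = f"
  unfolding proj_sub_def cochains_def by (auto simp: fun_eq_iff)

lemma cochains_mono: "Xt \<subseteq> X \<Longrightarrow> cochains Xt n m \<subseteq> cochains X n m"
  unfolding cochains_def by auto

lemma coboundary_subcomplex:
  assumes "finite X" "Xt \<subseteq> X" "c \<in> cochains Xt n q"
  shows "coboundary Xt n F q c = proj_sub Xt (coboundary X n F q c)"
proof (intro ext)
  fix t j
  have "incidence \<sigma> t * (\<Sum>i<n \<sigma>. F \<sigma> t j i * c \<sigma> i) = 0" if "\<sigma> \<notin> Xt" for \<sigma>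
  proof -
    have "c \<sigma> i = 0" for i
      using assms(3) that unfolding cochains_def by blast
    then show ?thesis
      by simp
  qed
  then have "(\<Sum>\<sigma>\<in>{\<sigma>\<in>Xt. length \<sigma> = q}. incidence \<sigma> t * (\<Sum>i<n \<sigma>. F \<sigma> t j i * c \<sigma> i))
      = (\<Sum>\<sigma>\<in>{\<sigma>\<in>X. length \<sigma> = q}. incidence \<sigma> t * (\<Sum>i<n \<sigma>. F \<sigma> t j i * c \<sigma> i))"
    using assms(1,2) by (intro sum.mono_neutral_left) auto
  with assms(2) show "coboundary Xt n F q c t j = proj_sub Xt (coboundary X n F q c) t j"
    unfolding coboundary_def proj_sub_def by auto
qed

section \<open>Cochains as a finite-dimensional inner product space\<close>

lemma (in vector_space) dim_Un_if_span_Int_zero: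
  assumes A: "finite A" "independent A" and B: "finite B" "independent B"
    and AB: "span A \<inter> span B \<subseteq> {0}"
  shows "dim (A \<union> B) = card A + card B"
proof -
  have disj: "A \<inter> B = {}"
    using AB A(2) span_base dependent_zero by blast
  have "independent (A \<union> B)"
  proof (rule independent_if_scalars_zero)
    fix f x assume sum0: "(\<Sum>x\<in>A \<union> B. f x *s x) = 0" and x: "x \<in> A \<union> B"
    define a where "a = (\<Sum>x\<in>A. f x *s x)"
    define b where "b = (\<Sum>x\<in>B. f x *s x)"
    have "a = - b"
      using sum0 unfolding a_def b_def sum.union_disjoint[OF A(1) B(1) disj] by (simp add: eq_neg_iff_add_eq_0)
    moreover have "a \<in> span A" "b \<in> span B"
      unfolding a_def b_def by (simp_all add: span_sum span_scale span_base)
    ultimately have "a = 0" "b = 0"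
      using AB span_neg[of b B] by auto
    show "f x = 0"
    proof (cases "x \<in> A")
      case True
      then show ?thesis
        using independentD[OF A(2) A(1) subset_refl] \<open>a = 0\<close> unfolding a_def by blast
    next
      case False
      then show ?thesis
        using x independentD[OF B(2) B(1) subset_refl] \<open>b = 0\<close> unfolding b_def by blast
    qed
  qed (use A B in simp)
  then show ?thesis
    using A(1) B(1) disj by (simp add: dim_eq_card_independent card_Un_disjoint)
qed

interpretation cochain: vector_space
  "(\<lambda>c f \<sigma> i. c * f \<sigma> i) :: 'a::field \<Rightarrow> ('v list \<Rightarrow> nat \<Rightarrow> 'a) \<Rightarrow> ('v list \<Rightarrow> nat \<Rightarrow> 'a)"
  by unfold_locales (auto simp: fun_eq_iff algebra_simps)

lemma cdim_eq_dim: "cdim S = cochain.dim S"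
  unfolding cdim_def ..

definition all_cochains :: "'v list set \<Rightarrow> ('v list \<Rightarrow> nat) \<Rightarrow> ('v list \<Rightarrow> nat \<Rightarrow> 'a::zero) set" where
  "all_cochains X n = {f. \<forall>\<sigma> i. \<not> (\<sigma> \<in> X \<and> i < n \<sigma>) \<longrightarrow> f \<sigma> i = 0}"

lemma cochains_subset_all_cochains: "Y \<subseteq> X \<Longrightarrow> cochains Y n k \<subseteq> all_cochains X n"
  unfolding cochains_def all_cochains_def by auto

lemma subspace_cochains: "cochain.subspace (cochains X n k)"
proof -
  have eq: "cochains X n k = {f. \<forall>\<sigma> i. \<not> (\<sigma> \<in> X \<and> length \<sigma> = k \<and> i < n \<sigma>) \<longrightarrow> f \<sigma> i = 0}"
    unfolding cochains_def by blast
  show ?thesis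
    unfolding cochain.subspace_def eq by auto
qed

lemma subspace_all_cochains: "cochain.subspace (all_cochains X n)"
  unfolding cochain.subspace_def all_cochains_def by simp

lemma module_hom_coboundary:
  "module_hom (\<lambda>c f \<sigma> i. c * f \<sigma> i) (\<lambda>c f \<sigma> i. c * f \<sigma> i) (coboundary Y n F m :: _ \<Rightarrow> _ \<Rightarrow> _ \<Rightarrow> 'a::field)"
  unfolding module_hom_iff coboundary_def
  by (auto simp: cochain.module_axioms fun_eq_iff distrib_left sum.distrib sum_distrib_left mult.left_commute)

lemma module_hom_proj_sub:
  "module_hom (\<lambda>c f \<sigma> i. c * f \<sigma> i) (\<lambda>c f \<sigma> i. c * f \<sigma> i) (proj_sub Xt :: _ \<Rightarrow> _ \<Rightarrow> _ \<Rightarrow> 'a::field)"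
  unfolding module_hom_iff proj_sub_def by (auto simp: cochain.module_axioms fun_eq_iff)

lemma all_cochains_finite_span:
  assumes "finite X"
  obtains E where "finite E" "(all_cochains X n :: ('v list \<Rightarrow> nat \<Rightarrow> 'a::field) set) \<subseteq> cochain.span E"
proof
  define I where "I = (SIGMA \<sigma>:X. {..<n \<sigma>})"
  define e :: "'v list \<times> nat \<Rightarrow> 'v list \<Rightarrow> nat \<Rightarrow> 'a" where
    "e = (\<lambda>p \<sigma> i. if (\<sigma>, i) = p then 1 else 0)"
  show "finite (e ` I)"
    unfolding I_def using assms by auto
  show "all_cochains X n \<subseteq> cochain.span (e ` I)"
  proof
    fix f :: "'v list \<Rightarrow> nat \<Rightarrow> 'a" assume f: "f \<in> all_cochains X n"
    have "f = (\<Sum>p\<in>I. (\<lambda>\<sigma> i. f (fst p) (snd p) * e p \<sigma> i))"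
    proof (intro ext)
      fix \<sigma> i
      have "(\<Sum>p\<in>I. (\<lambda>\<sigma> i. f (fst p) (snd p) * e p \<sigma> i)) \<sigma> i = (\<Sum>p\<in>I. f (fst p) (snd p) * e p \<sigma> i)"
        by (induct I rule: infinite_finite_induct) auto
      also have "\<dots> = (\<Sum>p\<in>I. if p = (\<sigma>, i) then f \<sigma> i else 0)"
        by (intro sum.cong) (auto simp: e_def)
      also have "\<dots> = f \<sigma> i"
        using f assms unfolding all_cochains_def I_def by auto
      finally show "f \<sigma> i = (\<Sum>p\<in>I. (\<lambda>\<sigma> i. f (fst p) (snd p) * e p \<sigma> i)) \<sigma> i"
        by simp
    qed
    also have "\<dots> \<in> cochain.span (e ` I)"
      by (intro cochain.span_sum cochain.span_scale cochain.span_base) auto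
    finally show "f \<in> cochain.span (e ` I)" .
  qed
qed

lemma finite_basis_subspace:
  fixes U :: "('v list \<Rightarrow> nat \<Rightarrow> 'a::field) set"
  assumes "finite X" "cochain.subspace U" "U \<subseteq> all_cochains X n"
  obtains B where "finite B" "B \<subseteq> U" "cochain.independent B" "cochain.span B = U"
proof -
  obtain B where B: "B \<subseteq> U" "cochain.independent B" "U \<subseteq> cochain.span B"
    by (rule cochain.maximal_independent_subset)
  obtain E where "finite E" "(all_cochains X n :: ('v list \<Rightarrow> nat \<Rightarrow> 'a) set) \<subseteq> cochain.span E"
    using all_cochains_finite_span[OF assms(1)] .
  with B assms(3) have "finite B"
    using cochain.independent_span_bound[of E B] by blast
  with B assms(2) that show ?thesis
    using cochain.span_subspace by blast
qed

lemma dim_sum_of_disjoint_subspaces: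
  fixes N B :: "('v list \<Rightarrow> nat \<Rightarrow> 'a::field) set"
  assumes X: "finite X" and N: "cochain.subspace N" "N \<subseteq> all_cochains X n"
    and B: "cochain.subspace B" "B \<subseteq> all_cochains X n" and NB: "N \<inter> B \<subseteq> {0}"
  shows "cochain.dim {a + b | a b. a \<in> N \<and> b \<in> B} = cochain.dim N + cochain.dim B"
proof -
  obtain BN where BN: "finite BN" "BN \<subseteq> N" "cochain.independent BN" "cochain.span BN = N"
    using finite_basis_subspace[OF X N] .
  obtain BB where BB: "finite BB" "BB \<subseteq> B" "cochain.independent BB" "cochain.span BB = B"
    using finite_basis_subspace[OF X B] .
  have "{a + b | a b. a \<in> N \<and> b \<in> B} = cochain.span (BN \<union> BB)"
    using cochain.span_Un[of BN BB] BN(4) BB(4) by simp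
  then have "cochain.dim {a + b | a b. a \<in> N \<and> b \<in> B} = cochain.dim (BN \<union> BB)"
    by (simp only: cochain.dim_span)
  also have "\<dots> = card BN + card BB"
    using BN BB NB by (intro cochain.dim_Un_if_span_Int_zero) auto
  also have "card BN = cochain.dim N"
    using BN(3,4) cochain.dim_span_eq_card_independent by metis
  also have "card BB = cochain.dim B"
    using BB(3,4) cochain.dim_span_eq_card_independent by metis
  finally show ?thesis .
qed

lemma cinner_add_left: "cinner X n (f + g) h = cinner X n f h + cinner X n g h"
  unfolding cinner_def by (simp add: distrib_right sum.distrib)

lemma cinner_add_right: "cinner X n h (f + g) = cinner X n h f + cinner X n h g"
  unfolding cinner_def by (simp add: conjugate_dist_add distrib_left sum.distrib)

lemma cinner_diff_left: "cinner X n (f - g) h = cinner X n f h - cinner X n g h"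
  unfolding cinner_def by (simp add: left_diff_distrib sum_subtractf)

lemma cinner_diff_right: "cinner X n h (f - g) = cinner X n h f - cinner X n h g"
  by (metis cinner_add_right diff_add_cancel eq_diff_eq)

lemma cinner_scale_left: "cinner X n (\<lambda>\<sigma> i. c * f \<sigma> i) g = c * cinner X n f g"
  unfolding cinner_def by (simp add: sum_distrib_left mult.assoc)

lemma cinner_scale_right:
  "cinner X n g (\<lambda>\<sigma> i. c * f \<sigma> i) = conjugate c * cinner X n g (f :: _ \<Rightarrow> _ \<Rightarrow> 'a::conjugatable_field)"
  unfolding cinner_def sum_distrib_left
  by (intro sum.cong refl) (simp add: conjugate_dist_mul mult.left_commute)

lemma cinner_zero_left [simp]: "cinner X n 0 g = 0"
  unfolding cinner_def by simp

lemma cinner_zero_right [simp]: "cinner X n g 0 = 0"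
  unfolding cinner_def by simp

lemma conjugate_cinner: "conjugate (cinner X n f g) = cinner X n g (f :: _ \<Rightarrow> _ \<Rightarrow> 'a::conjugatable_field)"
proof (cases "finite X")
  case True
  then show ?thesis
    unfolding cinner_def by (simp add: sum_conjugate conjugate_dist_mul mult.commute)
qed (simp add: cinner_def)

lemma cinner_self_nonneg: "cinner X n f f \<ge> (0::'a::conjugatable_ordered_field)"
  unfolding cinner_def by (intro sum_nonneg conjugate_square_positive)

lemma cinner_self_eq_0_iff:
  fixes f :: "'v list \<Rightarrow> nat \<Rightarrow> 'a::conjugatable_ordered_field"
  assumes "finite X" "f \<in> all_cochains X n"
  shows "cinner X n f f = 0 \<longleftrightarrow> f = 0"
proof
  assume "cinner X n f f = 0"
  then have "\<forall>\<sigma>\<in>X. \<forall>i<n \<sigma>. f \<sigma> i * conjugate (f \<sigma> i) = 0"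
    using assms(1) unfolding cinner_def
    by (simp add: sum_nonneg_eq_0_iff sum_nonneg conjugate_square_positive)
  with assms(2) show "f = 0"
    unfolding all_cochains_def by (auto simp: fun_eq_iff)
qed simp

lemma cinner_proj_sub: "cinner X n f (proj_sub Xt g) = cinner X n (proj_sub Xt f) g"
  unfolding cinner_def proj_sub_def by (intro sum.cong refl) auto

definition orth_compl ::
  "'v list set \<Rightarrow> ('v list \<Rightarrow> nat) \<Rightarrow> ('v list \<Rightarrow> nat \<Rightarrow> 'a::conjugatable_ring) set
     \<Rightarrow> ('v list \<Rightarrow> nat \<Rightarrow> 'a) set \<Rightarrow> ('v list \<Rightarrow> nat \<Rightarrow> 'a) set" where
  "orth_compl X n U S = {x \<in> U. \<forall>s\<in>S. cinner X n s x = 0}"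

lemma subspace_orth_compl:
  "cochain.subspace U \<Longrightarrow> cochain.subspace (orth_compl X n U (S :: (_ \<Rightarrow> _ \<Rightarrow> 'a::conjugatable_field) set))"
  unfolding cochain.subspace_def orth_compl_def by (simp add: cinner_add_right cinner_scale_right)

text \<open>One step of Gram-Schmidt.\<close>

lemma orthogonal_projection_insert:
  fixes c x px :: "'v list \<Rightarrow> nat \<Rightarrow> 'a::conjugatable_ordered_field"
  assumes X: "finite X" and c: "c \<in> all_cochains X n" and c_orth: "\<forall>u\<in>S. cinner X n u c = 0"
    and px: "px \<in> S" "\<forall>u\<in>S. cinner X n u (x - px) = 0"
  defines "p \<equiv> px + (\<lambda>\<sigma> i. conjugate (cinner X n c x / cinner X n c c) * c \<sigma> i)"
  shows "\<forall>u\<in>S. cinner X n u (x - p) = 0" and "cinner X n c (x - p) = 0"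
proof -
  show "\<forall>u\<in>S. cinner X n u (x - p) = 0"
    unfolding p_def using px(2) c_orth
    by (simp add: cinner_diff_right cinner_add_right cinner_scale_right diff_add_eq_diff_diff_swap)
  have "cinner X n c px = 0"
    using c_orth px(1) conjugate_cinner[of X n px c] by simp
  then show "cinner X n c (x - p) = 0"
    unfolding p_def using c
    by (cases "c = 0") (simp_all add: cinner_diff_right cinner_add_right cinner_scale_right cinner_self_eq_0_iff[OF X])
qed

lemma orthogonal_projection_span:
  fixes B :: "('v list \<Rightarrow> nat \<Rightarrow> 'a::conjugatable_ordered_field) set"
  assumes "finite X" "finite B" "B \<subseteq> all_cochains X n"
  shows "\<exists>p\<in>cochain.span B. \<forall>u\<in>cochain.span B. cinner X n u (x - p) = 0"
  using assms(2,3)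
proof (induct B arbitrary: x rule: finite_induct)
  case (insert b B)
  obtain pb where pb: "pb \<in> cochain.span B" "\<forall>u\<in>cochain.span B. cinner X n u (b - pb) = 0"
    using insert by blast
  obtain px where px: "px \<in> cochain.span B" "\<forall>u\<in>cochain.span B. cinner X n u (x - px) = 0"
    using insert by blast
  define c where "c = b - pb"
  have "cochain.span B \<subseteq> all_cochains X n"
    using insert(4) cochain.span_minimal[OF _ subspace_all_cochains] by auto
  then have c: "c \<in> all_cochains X n"
    unfolding c_def using insert(4) pb(1) subspace_all_cochains cochain.subspace_diff by blast
  have c_orth: "\<forall>u\<in>cochain.span B. cinner X n u c = 0"
    using pb(2) unfolding c_def .
  note proj = orthogonal_projection_insert[OF assms(1) c c_orth px]
  have "b \<in> cochain.span (insert b B)" "pb \<in> cochain.span (insert b B)"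
    using pb(1) cochain.span_mono[of B "insert b B"] by (auto intro: cochain.span_base)
  then have "c \<in> cochain.span (insert b B)"
    unfolding c_def by (rule cochain.span_diff)
  moreover have "px \<in> cochain.span (insert b B)"
    using px(1) cochain.span_mono[of B "insert b B"] by blast
  ultimately have "px + (\<lambda>\<sigma> i. conjugate (cinner X n c x / cinner X n c c) * c \<sigma> i) \<in> cochain.span (insert b B)"
    by (simp add: cochain.span_add cochain.span_scale)
  moreover have "cinner X n u (x - (px + (\<lambda>\<sigma> i. conjugate (cinner X n c x / cinner X n c c) * c \<sigma> i))) = 0"
    if u: "u \<in> cochain.span (insert b B)" for u
  proof -
    obtain k where k: "u - (\<lambda>\<sigma> i. k * b \<sigma> i) \<in> cochain.span B"
      using u cochain.span_breakdown_eq by blast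
    define u' where "u' = u - (\<lambda>\<sigma> i. k * b \<sigma> i) + (\<lambda>\<sigma> i. k * pb \<sigma> i)"
    have eq: "u = u' + (\<lambda>\<sigma> i. k * c \<sigma> i)"
      unfolding u'_def c_def by (simp add: fun_eq_iff algebra_simps)
    have "u' \<in> cochain.span B"
      unfolding u'_def by (rule cochain.span_add[OF k cochain.span_scale[OF pb(1)]])
    with proj show ?thesis
      by (subst eq) (simp add: cinner_add_left cinner_scale_left)
  qed
  ultimately show ?case
    by blast
qed (auto simp: cinner_def)

lemma orthogonal_projection_exists:
  fixes U :: "('v list \<Rightarrow> nat \<Rightarrow> 'a::conjugatable_ordered_field) set"
  assumes "finite X" "cochain.subspace U" "U \<subseteq> all_cochains X n"
  obtains p where "p \<in> U" "\<forall>u\<in>U. cinner X n u (x - p) = 0"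
proof -
  obtain B where "finite B" "B \<subseteq> U" "cochain.span B = U"
    using finite_basis_subspace[OF assms] by metis
  with assms that show ?thesis
    using orthogonal_projection_span[OF assms(1), of B n x] by auto
qed

lemma dim_orth_compl_add:
  fixes M B :: "('v list \<Rightarrow> nat \<Rightarrow> 'a::conjugatable_ordered_field) set"
  assumes X: "finite X" and M: "cochain.subspace M" "M \<subseteq> all_cochains X n"
    and B: "cochain.subspace B" "B \<subseteq> M"
  shows "cochain.dim M = cochain.dim (orth_compl X n M B) + cochain.dim B"
proof -
  have "M \<subseteq> {a + b | a b. a \<in> orth_compl X n M B \<and> b \<in> B}" (is "M \<subseteq> ?S")
  proof
    fix x assume "x \<in> M"
    obtain p where p: "p \<in> B" "\<forall>u\<in>B. cinner X n u (x - p) = 0"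
      using orthogonal_projection_exists[OF X B(1)] B(2) M(2) by (metis order_trans)
    then have "x - p \<in> orth_compl X n M B"
      using \<open>x \<in> M\<close> B(2) M(1) cochain.subspace_diff unfolding orth_compl_def by blast
    then show "x \<in> {a + b | a b. a \<in> orth_compl X n M B \<and> b \<in> B}"
      using p(1) by force
  qed
  moreover have "?S \<subseteq> M"
    using B(2) M(1) cochain.subspace_add unfolding orth_compl_def by blast
  ultimately have "?S = M"
    by (rule subset_antisym[rotated])
  moreover have "cochain.dim ?S = cochain.dim (orth_compl X n M B) + cochain.dim B"
  proof (rule dim_sum_of_disjoint_subspaces[OF X subspace_orth_compl[OF M(1)] _ B(1)])
    show "orth_compl X n M B \<subseteq> all_cochains X n" "B \<subseteq> all_cochains X n"
      using B(2) M(2) unfolding orth_compl_def by blast+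
    show "orth_compl X n M B \<inter> B \<subseteq> {0}"
      using B(2) M(2) cinner_self_eq_0_iff[OF X] unfolding orth_compl_def by blast
  qed
  ultimately show ?thesis
    by simp
qed

definition is_adjoint_at ::
  "'v list set \<Rightarrow> ('v list \<Rightarrow> nat) \<Rightarrow> ('v list \<Rightarrow> nat \<Rightarrow> 'a::conjugatable_ring) set
     \<Rightarrow> (('v list \<Rightarrow> nat \<Rightarrow> 'a) \<Rightarrow> ('v list \<Rightarrow> nat \<Rightarrow> 'a))
     \<Rightarrow> ('v list \<Rightarrow> nat \<Rightarrow> 'a) \<Rightarrow> ('v list \<Rightarrow> nat \<Rightarrow> 'a) \<Rightarrow> bool" where
  "is_adjoint_at X n U A x y \<longleftrightarrow> y \<in> U \<and> (\<forall>u\<in>U. cinner X n (A u) x = cinner X n u y)"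

lemma adjoint_at_eqI:
  fixes y :: "'v list \<Rightarrow> nat \<Rightarrow> 'a::conjugatable_ordered_field"
  assumes "finite X" "cochain.subspace U" "U \<subseteq> all_cochains X n" "is_adjoint_at X n U A x y"
  shows "adjoint_at (cinner X n) U A x = y"
  unfolding adjoint_at_def
proof (rule the_equality)
  fix y' assume y': "y' \<in> U \<and> (\<forall>u\<in>U. cinner X n (A u) x = cinner X n u y')"
  then have "y' - y \<in> U" "\<forall>u\<in>U. cinner X n u y' = cinner X n u y"
    using assms(2,4) cochain.subspace_diff unfolding is_adjoint_at_def by auto
  then have "y' - y \<in> U" "cinner X n (y' - y) (y' - y) = 0"
    by (simp_all add: cinner_diff_right)
  then have "y' - y = 0"
    using cinner_self_eq_0_iff[OF assms(1)] assms(3) by blast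
  then show "y' = y"
    by simp
qed (use assms(4) in \<open>simp add: is_adjoint_at_def\<close>)

text \<open>The adjoint at x is the orthogonal projection of b onto U.\<close>

lemma is_adjoint_at_adjoint_at:
  fixes b :: "'v list \<Rightarrow> nat \<Rightarrow> 'a::conjugatable_ordered_field"
  assumes "finite X" "cochain.subspace U" "U \<subseteq> all_cochains X n"
    and "\<forall>u\<in>U. cinner X n (A u) x = cinner X n u b"
  shows "is_adjoint_at X n U A x (adjoint_at (cinner X n) U A x)"
proof -
  obtain p where p: "p \<in> U" "\<forall>u\<in>U. cinner X n u (b - p) = 0"
    using orthogonal_projection_exists[OF assms(1-3)] .
  then have "is_adjoint_at X n U A x p"
    using assms(4) unfolding is_adjoint_at_def by (simp add: cinner_diff_right)
  then show ?thesis
    using adjoint_at_eqI[OF assms(1-3)] by simp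
qed

lemma is_adjoint_at_eq_0_iff:
  fixes y :: "'v list \<Rightarrow> nat \<Rightarrow> 'a::conjugatable_ordered_field"
  assumes "finite X" "U \<subseteq> all_cochains X n" "is_adjoint_at X n U A x y"
  shows "y = 0 \<longleftrightarrow> (\<forall>u\<in>U. cinner X n (A u) x = 0)"
  using assms cinner_self_eq_0_iff[OF assms(1), of y n] unfolding is_adjoint_at_def by auto

section \<open>The adjoint coboundary\<close>

definition coboundary_adj ::
  "'v list set \<Rightarrow> ('v list \<Rightarrow> nat) \<Rightarrow> ('v list \<Rightarrow> 'v list \<Rightarrow> nat \<Rightarrow> nat \<Rightarrow> 'a::conjugatable_field)
     \<Rightarrow> nat \<Rightarrow> ('v list \<Rightarrow> nat \<Rightarrow> 'a) \<Rightarrow> ('v list \<Rightarrow> nat \<Rightarrow> 'a)" where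
  "coboundary_adj Y n F m e = (\<lambda>\<sigma> i.
     if \<sigma> \<in> Y \<and> length \<sigma> = m \<and> i < n \<sigma> then
       (\<Sum>\<tau>\<in>{\<tau>\<in>Y. length \<tau> = Suc m}. \<Sum>j<n \<tau>. conjugate (incidence \<sigma> \<tau> * F \<sigma> \<tau> j i) * e \<tau> j)
     else 0)"

lemma coboundary_adj_in_cochains: "coboundary_adj Y n F m e \<in> cochains Y n m"
  unfolding coboundary_adj_def cochains_def by auto

lemma module_hom_coboundary_adj:
  "module_hom (\<lambda>c f \<sigma> i. c * f \<sigma> i) (\<lambda>c f \<sigma> i. c * f \<sigma> i)
     (coboundary_adj Y n F m :: _ \<Rightarrow> _ \<Rightarrow> _ \<Rightarrow> 'a::conjugatable_field)"
  unfolding module_hom_iff coboundary_adj_def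
  by (auto simp: cochain.module_axioms fun_eq_iff distrib_left sum.distrib sum_distrib_left mult.left_commute)

lemma cinner_coboundary:
  fixes u e :: "'v list \<Rightarrow> nat \<Rightarrow> 'a::conjugatable_field"
  assumes X: "finite X" and "Y \<subseteq> X" and u: "u \<in> cochains Y n m"
  shows "cinner X n (coboundary Y n F m u) e = cinner X n u (coboundary_adj Y n F m e)"
proof -
  define Ym where "Ym = {\<sigma>\<in>Y. length \<sigma> = m}"
  define Y1 where "Y1 = {\<tau>\<in>Y. length \<tau> = Suc m}"
  have sub: "Ym \<subseteq> X" "Y1 \<subseteq> X"
    using assms(2) unfolding Ym_def Y1_def by auto
  then have fin: "finite Y1"
    using X finite_subset by blast
  have "coboundary Y n F m u \<tau> = (\<lambda>j. 0)" if "\<tau> \<notin> Y1" for \<tau>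
    using that unfolding coboundary_def Y1_def by auto
  then have "cinner X n (coboundary Y n F m u) e
      = (\<Sum>\<tau>\<in>Y1. \<Sum>j<n \<tau>. coboundary Y n F m u \<tau> j * conjugate (e \<tau> j))"
    unfolding cinner_def using X sub by (intro sum.mono_neutral_right) auto
  also have "\<dots> = (\<Sum>\<tau>\<in>Y1. \<Sum>j<n \<tau>. \<Sum>\<sigma>\<in>Ym. \<Sum>i<n \<sigma>.
      u \<sigma> i * (incidence \<sigma> \<tau> * F \<sigma> \<tau> j i) * conjugate (e \<tau> j))"
    by (intro sum.cong refl)
      (auto simp: Y1_def Ym_def coboundary_def sum_distrib_left sum_distrib_right mult_ac)
  also have "\<dots> = (\<Sum>\<sigma>\<in>Ym. \<Sum>i<n \<sigma>. \<Sum>\<tau>\<in>Y1. \<Sum>j<n \<tau>.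
      u \<sigma> i * (incidence \<sigma> \<tau> * F \<sigma> \<tau> j i) * conjugate (e \<tau> j))"
    by (rule sum_swap4)
  also have "\<dots> = (\<Sum>\<sigma>\<in>Ym. \<Sum>i<n \<sigma>. u \<sigma> i * conjugate (coboundary_adj Y n F m e \<sigma> i))"
    using fin unfolding coboundary_adj_def Y1_def[symmetric]
    by (intro sum.cong refl)
      (auto simp: Ym_def sum_conjugate conjugate_dist_mul sum_distrib_left mult.assoc)
  also have "\<dots> = cinner X n u (coboundary_adj Y n F m e)"
  proof -
    have "u \<sigma> = (\<lambda>i. 0)" if "\<sigma> \<notin> Ym" for \<sigma>
      using u that unfolding cochains_def Ym_def by auto
    then show ?thesis
      unfolding cinner_def using X sub by (intro sum.mono_neutral_left) auto
  qed
  finally show ?thesis .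
qed

lemma cinner_coboundary_adj:
  fixes u e :: "'v list \<Rightarrow> nat \<Rightarrow> 'a::conjugatable_field"
  assumes "finite X" "Y \<subseteq> X" "u \<in> cochains Y n m"
  shows "cinner X n (coboundary_adj Y n F m e) u = cinner X n e (coboundary Y n F m u)"
  using arg_cong[OF cinner_coboundary[OF assms, of F e], of conjugate] by (simp add: conjugate_cinner)

lemma adjoint_at_coboundary:
  fixes e :: "'v list \<Rightarrow> nat \<Rightarrow> 'a::conjugatable_ordered_field"
  assumes "finite X" "Y \<subseteq> X"
  shows "adjoint_at (cinner X n) (cochains Y n m) (coboundary Y n F m) e = coboundary_adj Y n F m e"
  using assms coboundary_adj_in_cochains cinner_coboundary[OF assms]
  by (intro adjoint_at_eqI subspace_cochains cochains_subset_all_cochains) (auto simp: is_adjoint_at_def)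

section \<open>The persistent Laplacian and its kernel\<close>

definition persistent_cochains ::
  "'v list set \<Rightarrow> 'v list set \<Rightarrow> ('v list \<Rightarrow> nat) \<Rightarrow> ('v list \<Rightarrow> 'v list \<Rightarrow> nat \<Rightarrow> nat \<Rightarrow> 'a::conjugatable_field)
     \<Rightarrow> nat \<Rightarrow> ('v list \<Rightarrow> nat \<Rightarrow> 'a) set" where
  "persistent_cochains X Xt n F m =
     {e \<in> cochains X n (Suc m). coboundary_adj X n F m e \<in> cochains Xt n m}"

definition persistent_coboundary ::
  "'v list set \<Rightarrow> 'v list set \<Rightarrow> ('v list \<Rightarrow> nat) \<Rightarrow> ('v list \<Rightarrow> 'v list \<Rightarrow> nat \<Rightarrow> nat \<Rightarrow> 'a::conjugatable_field)
     \<Rightarrow> nat \<Rightarrow> ('v list \<Rightarrow> nat \<Rightarrow> 'a) \<Rightarrow> ('v list \<Rightarrow> nat \<Rightarrow> 'a)" where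
  "persistent_coboundary X Xt n F m =
     adjoint_at (cinner X n) (persistent_cochains X Xt n F m) (coboundary_adj X n F m)"

lemma subspace_persistent_cochains:
  "cochain.subspace (persistent_cochains X Xt n F m :: (_ \<Rightarrow> _ \<Rightarrow> 'a::conjugatable_field) set)"
proof -
  have "persistent_cochains X Xt n F m
      = cochains X n (Suc m) \<inter> coboundary_adj X n F m -` (cochains Xt n m :: (_ \<Rightarrow> _ \<Rightarrow> 'a) set)"
    unfolding persistent_cochains_def by blast
  then show ?thesis
    by (simp add: cochain.subspace_inter subspace_cochains
        module_hom.subspace_vimage[OF module_hom_coboundary_adj subspace_cochains])
qed

lemma is_adjoint_at_persistent_coboundary:
  fixes x :: "'v list \<Rightarrow> nat \<Rightarrow> 'a::conjugatable_ordered_field"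
  assumes "finite X" "Xt \<subseteq> X" "x \<in> cochains Xt n m"
  shows "is_adjoint_at X n (persistent_cochains X Xt n F m) (coboundary_adj X n F m) x
           (persistent_coboundary X Xt n F m x)"
  unfolding persistent_coboundary_def
proof (rule is_adjoint_at_adjoint_at[OF assms(1) subspace_persistent_cochains])
  show "persistent_cochains X Xt n F m \<subseteq> all_cochains X n"
    unfolding persistent_cochains_def using cochains_subset_all_cochains[of X X] by blast
  have "x \<in> cochains X n m"
    using assms(2,3) cochains_mono by blast
  then show "\<forall>w\<in>persistent_cochains X Xt n F m.
      cinner X n (coboundary_adj X n F m w) x = cinner X n w (coboundary X n F m x)"
    using cinner_coboundary_adj[OF assms(1) subset_refl] by blast
qed

lemma persistent_sheaf_laplacian_eq:
  fixes x :: "'v list \<Rightarrow> nat \<Rightarrow> 'a::conjugatable_ordered_field"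
  assumes X: "finite X" and Xt: "Xt \<subseteq> X" and x: "x \<in> cochains Xt n (Suc q)"
  shows "persistent_sheaf_laplacian X Xt n F q x
    = coboundary_adj X n F (Suc q) (persistent_coboundary X Xt n F (Suc q) x)
      + coboundary Xt n F q (coboundary_adj Xt n F q x)"
proof -
  let ?C = "persistent_cochains X Xt n F (Suc q)" and ?eth = "persistent_coboundary X Xt n F (Suc q)"
  have "adjoint_at (cinner X n) (cochains Xt n (Suc q)) ?eth (?eth x)
      = coboundary_adj X n F (Suc q) (?eth x)"
  proof (rule adjoint_at_eqI[OF X subspace_cochains cochains_subset_all_cochains[OF Xt]])
    have "?eth u \<in> ?C \<and> (\<forall>w\<in>?C. cinner X n (coboundary_adj X n F (Suc q) w) u = cinner X n w (?eth u))"
      if "u \<in> cochains Xt n (Suc q)" for u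
      using is_adjoint_at_persistent_coboundary[OF X Xt that] unfolding is_adjoint_at_def .
    with x show "is_adjoint_at X n (cochains Xt n (Suc q)) ?eth (?eth x) (coboundary_adj X n F (Suc q) (?eth x))"
      unfolding is_adjoint_at_def persistent_cochains_def
      by (metis (no_types, lifting) conjugate_cinner mem_Collect_eq)
  qed
  moreover have "adjoint_at (cinner X n) (cochains X n (Suc q)) (coboundary X n F (Suc q))
      = coboundary_adj X n F (Suc q)"
    using adjoint_at_coboundary[OF X subset_refl] by blast
  moreover have "adjoint_at (cinner X n) (cochains Xt n q) (coboundary Xt n F q) = coboundary_adj Xt n F q"
    using adjoint_at_coboundary[OF X Xt] by blast
  ultimately show ?thesis
    unfolding persistent_sheaf_laplacian_def Let_def persistent_coboundary_def persistent_cochains_def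
    by simp
qed

lemma persistent_sheaf_laplacian_eq_0_iff:
  fixes x :: "'v list \<Rightarrow> nat \<Rightarrow> 'a::conjugatable_ordered_field"
  assumes X: "finite X" and Xt: "Xt \<subseteq> X" and x: "x \<in> cochains Xt n (Suc q)"
  shows "persistent_sheaf_laplacian X Xt n F q x = 0
    \<longleftrightarrow> (\<forall>w\<in>persistent_cochains X Xt n F (Suc q). cinner X n (coboundary_adj X n F (Suc q) w) x = 0)
      \<and> (\<forall>u\<in>cochains Xt n q. cinner X n (coboundary Xt n F q u) x = 0)"
proof -
  define y where "y = persistent_coboundary X Xt n F (Suc q) x"
  define z where "z = coboundary_adj Xt n F q x"
  have y: "is_adjoint_at X n (persistent_cochains X Xt n F (Suc q)) (coboundary_adj X n F (Suc q)) x y"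
    unfolding y_def by (rule is_adjoint_at_persistent_coboundary[OF X Xt x])
  have z: "is_adjoint_at X n (cochains Xt n q) (coboundary Xt n F q) x z"
    unfolding z_def is_adjoint_at_def using cinner_coboundary[OF X Xt] coboundary_adj_in_cochains by blast
  have Cy: "persistent_cochains X Xt n F (Suc q) \<subseteq> all_cochains X n" and Cz: "cochains Xt n q \<subseteq> all_cochains X n"
    using cochains_subset_all_cochains[of X X] cochains_subset_all_cochains[OF Xt]
    unfolding persistent_cochains_def by blast+
  have "persistent_sheaf_laplacian X Xt n F q x = 0 \<longleftrightarrow> y = 0 \<and> z = 0"
  proof
    assume "persistent_sheaf_laplacian X Xt n F q x = 0"
    moreover have "cinner X n (coboundary_adj X n F (Suc q) y) x = cinner X n y y"
      "cinner X n (coboundary Xt n F q z) x = cinner X n z z"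
      using y z unfolding is_adjoint_at_def by blast+
    ultimately have "cinner X n y y + cinner X n z z = 0"
      unfolding persistent_sheaf_laplacian_eq[OF X Xt x] y_def[symmetric] z_def[symmetric]
      by (metis cinner_add_left cinner_zero_left)
    then show "y = 0 \<and> z = 0"
      using y z Cy Cz cinner_self_eq_0_iff[OF X] cinner_self_nonneg add_nonneg_eq_0_iff
      unfolding is_adjoint_at_def by (metis subsetD)
  qed (simp add: persistent_sheaf_laplacian_eq[OF X Xt x] y_def[symmetric] z_def[symmetric]
         module_hom.zero[OF module_hom_coboundary] module_hom.zero[OF module_hom_coboundary_adj])
  then show ?thesis
    using is_adjoint_at_eq_0_iff[OF X Cy y] is_adjoint_at_eq_0_iff[OF X Cz z] by simp
qed

lemma persistent_sheaf_laplacian_kernel: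
  fixes X :: "'v list set" and F :: "_ \<Rightarrow> _ \<Rightarrow> _ \<Rightarrow> _ \<Rightarrow> 'a::conjugatable_ordered_field"
  assumes "finite X" "Xt \<subseteq> X"
  shows "{x \<in> cochains Xt n (Suc q). persistent_sheaf_laplacian X Xt n F q x = 0}
    = orth_compl X n
        (orth_compl X n (cochains Xt n (Suc q))
           (coboundary_adj X n F (Suc q) ` persistent_cochains X Xt n F (Suc q)))
        (coboundary Xt n F q ` cochains Xt n q)"
  using persistent_sheaf_laplacian_eq_0_iff[OF assms] unfolding orth_compl_def by auto

section \<open>The image of cohomology under the projection\<close>

text \<open>The part of \<open>d\<^sup>* r\<close> outside Xt vanishes on Xt, so by hypothesis it is orthogonal to
  \<open>d\<^sup>* r\<close>, hence to itself.\<close>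

lemma persistent_cochainsI:
  fixes r :: "'v list \<Rightarrow> nat \<Rightarrow> 'a::conjugatable_ordered_field"
  assumes X: "finite X" and Xt: "Xt \<subseteq> X" and r: "r \<in> cochains X n (Suc m)"
    and r_orth: "\<forall>y\<in>cochains X n m. proj_sub Xt y = 0 \<longrightarrow> cinner X n (coboundary X n F m y) r = 0"
  shows "r \<in> persistent_cochains X Xt n F m"
proof -
  define g where "g = coboundary_adj X n F m r"
  define h where "h = g - proj_sub Xt g"
  have g: "g \<in> cochains X n m"
    unfolding g_def by (rule coboundary_adj_in_cochains)
  moreover have "proj_sub Xt g \<in> cochains X n m"
    using proj_sub_in_cochains[OF g] cochains_mono[OF Xt] by blast
  ultimately have "h \<in> cochains X n m"
    unfolding h_def by (rule cochain.subspace_diff[OF subspace_cochains])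
  moreover have "proj_sub Xt h = 0"
    unfolding h_def by (simp add: proj_sub_def fun_eq_iff)
  ultimately have h: "h \<in> cochains X n m" "proj_sub Xt h = 0"
    by blast+
  have "cinner X n h h = cinner X n h g - cinner X n (proj_sub Xt h) g"
    unfolding h_def by (simp add: cinner_diff_right cinner_proj_sub)
  also have "\<dots> = 0"
    using h r_orth cinner_coboundary[OF X subset_refl h(1), of F r] unfolding g_def by simp
  finally have "h = 0"
    using h(1) cinner_self_eq_0_iff[OF X] cochains_subset_all_cochains[of X X] by blast
  then have "g \<in> cochains Xt n m"
    using proj_sub_in_cochains[OF g, of Xt] unfolding h_def by simp
  with r show ?thesis
    unfolding persistent_cochains_def g_def by blast
qed

lemma proj_cocycles_subset_orth_compl:
  fixes F :: "_ \<Rightarrow> _ \<Rightarrow> _ \<Rightarrow> _ \<Rightarrow> 'a::conjugatable_ordered_field"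
  assumes X: "finite X"
  shows "proj_sub Xt ` {z \<in> cochains X n m. coboundary X n F m z = 0}
    \<subseteq> orth_compl X n (cochains Xt n m) (coboundary_adj X n F m ` persistent_cochains X Xt n F m)"
proof
  fix x assume "x \<in> proj_sub Xt ` {z \<in> cochains X n m. coboundary X n F m z = 0}"
  then obtain z where z: "z \<in> cochains X n m" "coboundary X n F m z = 0" "x = proj_sub Xt z"
    by blast
  have "cinner X n (coboundary_adj X n F m w) x = 0" if "w \<in> persistent_cochains X Xt n F m" for w
  proof -
    have "proj_sub Xt (coboundary_adj X n F m w) = coboundary_adj X n F m w"
      using that proj_sub_cochains unfolding persistent_cochains_def by blast
    then show ?thesis
      using z cinner_coboundary_adj[OF X subset_refl z(1)] by (simp add: cinner_proj_sub)
  qed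
  with z show "x \<in> orth_compl X n (cochains Xt n m) (coboundary_adj X n F m ` persistent_cochains X Xt n F m)"
    unfolding orth_compl_def by (auto intro: proj_sub_in_cochains)
qed

lemma coboundary_orth_correctionE:
  fixes v :: "'v list \<Rightarrow> nat \<Rightarrow> 'a::conjugatable_ordered_field"
  assumes X: "finite X" and v: "v \<in> cochains X n m"
  obtains y where "y \<in> cochains X n m" "proj_sub Xt y = 0"
    and "\<forall>u\<in>cochains X n m. proj_sub Xt u = 0 \<longrightarrow>
           cinner X n (coboundary X n F m u) (coboundary X n F m (v - y)) = 0"
proof -
  define Y where "Y = {y \<in> cochains X n m. proj_sub Xt y = (0 :: _ \<Rightarrow> _ \<Rightarrow> 'a)}"
  have "Y = cochains X n m \<inter> {y. proj_sub Xt y = 0}"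
    unfolding Y_def by blast
  then have "cochain.subspace Y"
    using cochain.subspace_inter[OF subspace_cochains module_hom.subspace_kernel[OF module_hom_proj_sub]]
    by simp
  then have "cochain.subspace (coboundary X n F m ` Y)" "coboundary X n F m ` Y \<subseteq> all_cochains X n"
    using module_hom.subspace_image[OF module_hom_coboundary] coboundary_in_cochains
      cochains_subset_all_cochains[of X X] by blast+
  then obtain p where p: "p \<in> coboundary X n F m ` Y"
    "\<forall>u\<in>coboundary X n F m ` Y. cinner X n u (coboundary X n F m v - p) = 0"
    using orthogonal_projection_exists[OF X] by metis
  then obtain y where "y \<in> Y" "p = coboundary X n F m y"
    by blast
  moreover have "coboundary X n F m v - p = coboundary X n F m (v - y)"
    unfolding \<open>p = coboundary X n F m y\<close> by (rule module_hom.diff[OF module_hom_coboundary, symmetric])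
  ultimately show ?thesis
    using that p(2) unfolding Y_def by auto
qed

lemma orth_compl_subset_proj_cocycles:
  fixes F :: "_ \<Rightarrow> _ \<Rightarrow> _ \<Rightarrow> _ \<Rightarrow> 'a::conjugatable_ordered_field"
  assumes X: "finite X" and Xt: "Xt \<subseteq> X"
  shows "orth_compl X n (cochains Xt n m) (coboundary_adj X n F m ` persistent_cochains X Xt n F m)
    \<subseteq> proj_sub Xt ` {z \<in> cochains X n m. coboundary X n F m z = 0}"
proof
  fix v assume "v \<in> orth_compl X n (cochains Xt n m) (coboundary_adj X n F m ` persistent_cochains X Xt n F m)"
  then have v: "v \<in> cochains Xt n m"
    and v_orth: "\<forall>w\<in>persistent_cochains X Xt n F m. cinner X n (coboundary_adj X n F m w) v = 0"
    unfolding orth_compl_def by auto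
  have vX: "v \<in> cochains X n m"
    using v Xt cochains_mono by blast
  obtain y where y: "y \<in> cochains X n m" "proj_sub Xt y = 0"
    and y_orth: "\<forall>u\<in>cochains X n m. proj_sub Xt u = 0 \<longrightarrow>
           cinner X n (coboundary X n F m u) (coboundary X n F m (v - y)) = 0"
    using coboundary_orth_correctionE[OF X vX] .
  define r where "r = coboundary X n F m (v - y)"
  have r: "r \<in> persistent_cochains X Xt n F m"
    unfolding r_def using y_orth by (intro persistent_cochainsI[OF X Xt] coboundary_in_cochains)
  have "cinner X n r r = cinner X n (coboundary X n F m v) r - cinner X n (coboundary X n F m y) r"
    unfolding r_def by (simp add: module_hom.diff[OF module_hom_coboundary] cinner_diff_left)
  also have "cinner X n (coboundary X n F m y) r = 0"
    using y y_orth unfolding r_def by blast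
  also have "cinner X n (coboundary X n F m v) r = conjugate (cinner X n (coboundary_adj X n F m r) v)"
    by (simp add: cinner_coboundary[OF X subset_refl vX] conjugate_cinner)
  also have "cinner X n (coboundary_adj X n F m r) v = 0"
    using v_orth r by blast
  finally have "coboundary X n F m (v - y) = 0"
    using cinner_self_eq_0_iff[OF X] coboundary_in_cochains cochains_subset_all_cochains[of X X]
    unfolding r_def by fastforce
  moreover have "v - y \<in> cochains X n m"
    using vX y(1) by (rule cochain.subspace_diff[OF subspace_cochains])
  moreover have "proj_sub Xt (v - y) = v"
    using y(2) proj_sub_cochains[OF v] by (simp add: module_hom.diff[OF module_hom_proj_sub])
  ultimately show "v \<in> proj_sub Xt ` {z \<in> cochains X n m. coboundary X n F m z = 0}"
    by force
qed

lemma coboundary_subcomplex_subset_proj_cocycles: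
  fixes F :: "_ \<Rightarrow> _ \<Rightarrow> _ \<Rightarrow> _ \<Rightarrow> 'a::field"
  assumes "oriented_complex X" "cellular_sheaf X n F" "Xt \<subseteq> X"
  shows "coboundary Xt n F q ` cochains Xt n q
    \<subseteq> proj_sub Xt ` {z \<in> cochains X n (Suc q). coboundary X n F (Suc q) z = 0}"
proof
  fix b assume "b \<in> coboundary Xt n F q ` cochains Xt n q"
  then obtain c where "c \<in> cochains Xt n q" "b = coboundary Xt n F q c"
    by blast
  moreover have "finite X"
    using assms(1) unfolding oriented_complex_def by blast
  ultimately have "b = proj_sub Xt (coboundary X n F q c)"
    using coboundary_subcomplex assms(3) by blast
  then show "b \<in> proj_sub Xt ` {z \<in> cochains X n (Suc q). coboundary X n F (Suc q) z = 0}"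
    using coboundary_coboundary[OF assms(1,2)] coboundary_in_cochains by blast
qed

theorem mainTheorem2:
  fixes X Xt :: "'v list set"
    and n :: "'v list \<Rightarrow> nat"
    and F :: "'v list \<Rightarrow> 'v list \<Rightarrow> nat \<Rightarrow> nat \<Rightarrow> 'a::conjugatable_ordered_field"
    and q :: nat
  assumes "oriented_complex X"
    and "oriented_complex Xt"
    and "Xt \<subseteq> X"
    and "cellular_sheaf X n F"
  shows "cdim {x \<in> cochains Xt n (Suc q). persistent_sheaf_laplacian X Xt n F q x = 0}
           = cohom_image_dim X Xt n F q"
proof -
  have X: "finite X"
    using assms(1) unfolding oriented_complex_def by blast
  define M where "M = orth_compl X n (cochains Xt n (Suc q))
    (coboundary_adj X n F (Suc q) ` persistent_cochains X Xt n F (Suc q))"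
  define B where "B = coboundary Xt n F q ` cochains Xt n q"
  have proj_cocycles: "proj_sub Xt ` {z \<in> cochains X n (Suc q). coboundary X n F (Suc q) z = 0} = M"
    unfolding M_def
    by (intro subset_antisym proj_cocycles_subset_orth_compl[OF X] orth_compl_subset_proj_cocycles[OF X assms(3)])
  have "B \<subseteq> M"
    unfolding B_def proj_cocycles[symmetric] by (rule coboundary_subcomplex_subset_proj_cocycles[OF assms(1,4,3)])
  moreover have M: "cochain.subspace M" "M \<subseteq> all_cochains X n"
    unfolding M_def by (rule subspace_orth_compl[OF subspace_cochains])
      (use cochains_subset_all_cochains[OF assms(3)] in \<open>auto simp: orth_compl_def\<close>)
  moreover have B: "cochain.subspace B"
    unfolding B_def by (rule module_hom.subspace_image[OF module_hom_coboundary subspace_cochains])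
  ultimately have "{a + b | a b. a \<in> M \<and> b \<in> B} = M"
    using cochain.subspace_add cochain.subspace_0[OF B] by (blast intro: add_0_right[symmetric])
  then have "cohom_image_dim X Xt n F q = cochain.dim M - cochain.dim B"
    unfolding cohom_image_dim_def Let_def proj_cocycles B_def[symmetric] cdim_eq_dim by simp
  also have "\<dots> = cochain.dim (orth_compl X n M B)"
    using dim_orth_compl_add[OF X M B \<open>B \<subseteq> M\<close>] by simp
  finally show ?thesis
    unfolding persistent_sheaf_laplacian_kernel[OF X assms(3)] M_def[symmetric] B_def[symmetric] cdim_eq_dim by simp
qed

end
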